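(* Let $Z\sim N(0,1)$ and let $x=(x_1,\ldots,x_n)$ be a vector of i.i.d. symmetric Bernoulli random variables (taking values $\pm1$ with probability $1/2$ each). Fix $u\in S^{n-1}$ and let $X=\langle u,x\rangle$. Then for every $\sigma\in(0,1)$, $$\mathbb{E}\exp(\sigma^2X^2/2)\le\mathbb{E}\exp(\sigma^2Z^2/2)=\frac{1}{\sqrt{1-\sigma^2}}.$$ Furthermore, the sub-gaussian norm $\alpha(n):=\|x\|_{\psi_2}$ satisfies $\alpha(n)\le\sqrt{8}/\sqrt{3}$ and $\alpha(n)\to\sqrt{8}/\sqrt{3}$ as $n\to\infty$.
   Context: For a real random variable $Y$, $\|Y\|_{\psi_2}=\inf\{t>0:\mathbb{E}\exp(Y^2/t^2)\le2\}$; for a random vector $X\in\mathbb{R}^n$, $\|X\|_{\psi_2}=\sup_{u\in S^{n-1}}\|\langle X,u\rangle\|_{\psi_2}$, where $S^{n-1}$ is the unit sphere in $\mathbb{R}^n$. *)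

theory Defs
  imports "HOL-Probability.Probability"
begin

definition psi2_norm :: "'a measure \<Rightarrow> ('a \<Rightarrow> real) \<Rightarrow> real" where
  "psi2_norm M Y = Inf {t::real. t > 0 \<and> (\<integral>\<^sup>+ \<omega>. ennreal (exp ((Y \<omega>)\<^sup>2 / t\<^sup>2)) \<partial>M) \<le> 2}"

definition unit_sphere :: "nat \<Rightarrow> (nat \<Rightarrow> real) set" where
  "unit_sphere n = {u \<in> {..<n} \<rightarrow>\<^sub>E UNIV. (\<Sum>i<n. (u i)\<^sup>2) = 1}"

definition psi2_vec_norm :: "'a measure \<Rightarrow> nat \<Rightarrow> ('a \<Rightarrow> nat \<Rightarrow> real) \<Rightarrow> real" where
  "psi2_vec_norm M n X = Sup ((\<lambda>u. psi2_norm M (\<lambda>\<omega>. \<Sum>i<n. X \<omega> i * u i)) ` unit_sphere n)"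

text \<open>Sign vectors {-1,1}^n; the uniform distribution on them is the law of n i.i.d.
  symmetric Bernoulli (Rademacher) variables.\<close>
definition sign_vectors :: "nat \<Rightarrow> (nat \<Rightarrow> real) set" where
  "sign_vectors n = {..<n} \<rightarrow>\<^sub>E {-1, 1}"

definition rademacher :: "nat \<Rightarrow> (nat \<Rightarrow> real) pmf" where
  "rademacher n = pmf_of_set (sign_vectors n)"

definition alpha :: "nat \<Rightarrow> real" where
  "alpha n = psi2_vec_norm (measure_pmf (rademacher n)) n (\<lambda>x. x)"

definition std_gaussian :: "real measure" where
  "std_gaussian = density lborel (\<lambda>z. ennreal (std_normal_density z))"

end

theory Submission
  imports Defs
begin

text \<open>Writing \<open>exp (a\<^sup>2 / 2) = E exp (a Z)\<close> with a standard Gaussian \<open>Z\<close> and averaging over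
  the signs first (Hubbard--Stratonovich) gives \<open>E exp (\<sigma>\<^sup>2 X\<^sup>2 / 2) = E \<Prod>\<^sub>i cosh (\<sigma> u\<^sub>i Z)\<close>.
  Since \<open>cosh y \<le> exp (y\<^sup>2 / 2)\<close> and \<open>\<Sum>\<^sub>i u\<^sub>i\<^sup>2 = 1\<close>, this is at most
  \<open>E exp (\<sigma>\<^sup>2 Z\<^sup>2 / 2) = 1 / sqrt (1 - \<sigma>\<^sup>2)\<close>. As \<open>E exp (X\<^sup>2 / t\<^sup>2)\<close> is the case
  \<open>\<sigma>\<^sup>2 = 2 / t\<^sup>2\<close>, the choice \<open>t\<^sup>2 = 8 / 3\<close> (so \<open>\<sigma>\<^sup>2 = 3 / 4\<close> and the bound is 2) shows that
  every direction has psi_2-norm at most \<open>sqrt (8 / 3)\<close>.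

  Conversely, in the flat direction \<open>u = (1, \<dots>, 1) / sqrt m\<close> the bound \<open>cosh y \<ge> 1 + y\<^sup>2 / 2\<close>
  gives \<open>E exp (\<sigma>\<^sup>2 X\<^sup>2 / 2) \<ge> E (1 + \<sigma>\<^sup>2 Z\<^sup>2 / (2 m))\<^sup>m\<close>, which tends to \<open>1 / sqrt (1 - \<sigma>\<^sup>2)\<close> by
  dominated convergence. For \<open>\<sigma>\<^sup>2 > 3 / 4\<close> this limit exceeds 2, so the psi_2-norm in the flat
  direction eventually exceeds every \<open>t < sqrt (8 / 3)\<close>.\<close>

lemma has_bochner_integral_mono:
  fixes f g :: "'a \<Rightarrow> real"
  assumes "has_bochner_integral M f a" "has_bochner_integral M g b" "\<And>x. f x \<le> g x"
  shows "a \<le> b"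
  using assms integral_mono[of M f g] by (simp add: has_bochner_integral_iff)

lemma std_normal_mgf:
  "has_bochner_integral lborel (\<lambda>z. std_normal_density z * exp (c * z)) (exp (c\<^sup>2 / 2))"
proof -
  have "std_normal_density z * exp (c * z) = exp (c\<^sup>2 / 2) * normal_density c 1 z" for z
  proof -
    have "exp (- z\<^sup>2 / 2) * exp (c * z) = exp (c\<^sup>2 / 2) * exp (- (z - c)\<^sup>2 / 2)"
      by (simp add: power2_eq_square algebra_simps diff_divide_distrib add_divide_distrib
          flip: exp_add)
    then show ?thesis
      unfolding std_normal_density_def normal_density_def by simp
  qed
  moreover have "has_bochner_integral lborel (\<lambda>z. exp (c\<^sup>2 / 2) * normal_density c 1 z) (exp (c\<^sup>2 / 2) * 1)"
    by (intro has_bochner_integral_mult_right) (simp add: has_bochner_integral_iff)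
  ultimately show ?thesis
    by simp
qed

lemma std_normal_exp_square:
  assumes "s < 1"
  shows "has_bochner_integral lborel (\<lambda>z. std_normal_density z * exp (s * z\<^sup>2 / 2)) (1 / sqrt (1 - s))"
proof -
  define \<tau> where "\<tau> = 1 / sqrt (1 - s)"
  have pos: "0 < 1 - s" and "0 < \<tau>"
    using assms by (simp_all add: \<tau>_def)
  have \<tau>_sq: "\<tau>\<^sup>2 = 1 / (1 - s)"
    using pos by (simp add: \<tau>_def power_divide)
  have "std_normal_density z * exp (s * z\<^sup>2 / 2) = \<tau> * normal_density 0 \<tau> z" for z
  proof -
    have "exp (- z\<^sup>2 / 2) * exp (s * z\<^sup>2 / 2) = exp (- (z - 0)\<^sup>2 / (2 * \<tau>\<^sup>2))"
      unfolding \<tau>_sq using pos by (simp add: field_simps flip: exp_add)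
    moreover have "sqrt (2 * pi * \<tau>\<^sup>2) = sqrt (2 * pi) * \<tau>"
      using \<open>0 < \<tau>\<close> by (simp add: real_sqrt_mult)
    ultimately show ?thesis
      unfolding std_normal_density_def normal_density_def using \<open>0 < \<tau>\<close> by simp
  qed
  moreover have "has_bochner_integral lborel (\<lambda>z. \<tau> * normal_density 0 \<tau> z) (\<tau> * 1)"
    by (intro has_bochner_integral_mult_right) (simp add: has_bochner_integral_iff \<open>0 < \<tau>\<close>)
  ultimately show ?thesis
    by (simp add: \<tau>_def)
qed

lemma integral_std_gaussian:
  fixes f :: "real \<Rightarrow> real"
  assumes "f \<in> borel_measurable borel"
  shows "(\<integral>z. f z \<partial>std_gaussian) = (\<integral>z. std_normal_density z * f z \<partial>lborel)"
  unfolding std_gaussian_def using assms by (subst integral_density) auto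

lemma cosh_le_exp_square_half: "cosh (y::real) \<le> exp (y\<^sup>2 / 2)"
proof -
  define a where "a = \<bar>y\<bar>"
  \<comment> \<open>Hoeffding's lemma for a uniform random sign, whose moment generating function is cosh.\<close>
  have "- (2 * a) * (1 / 2) + ln (1 + 1 / 2 * (exp (2 * a) - 1)) \<le> (2 * a)\<^sup>2 / 8"
    by (rule Hoeffdings_lemma_aux) (simp_all add: a_def)
  moreover have "1 + 1 / 2 * (exp (2 * a) - 1) = exp a * cosh a"
    by (simp add: cosh_def exp_minus field_simps power2_eq_square flip: exp_add)
  ultimately have "ln (cosh a) \<le> y\<^sup>2 / 2"
    by (simp add: ln_mult a_def power2_eq_square)
  then have "exp (ln (cosh a)) \<le> exp (y\<^sup>2 / 2)"
    by (simp only: exp_le_cancel_iff)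
  then show ?thesis
    by (simp add: a_def)
qed

lemma sinh_real_ge_self:
  assumes "0 \<le> y"
  shows "y \<le> sinh (y::real)"
proof -
  have "sinh 0 - 0 \<le> sinh y - y"
    by (rule DERIV_nonneg_imp_increasing_open[OF assms, where f = "\<lambda>x. sinh x - x"])
       (auto intro!: exI derivative_eq_intros continuous_intros simp: cosh_real_ge_1)
  then show ?thesis
    by simp
qed

lemma one_plus_square_half_le_cosh: "1 + (y::real)\<^sup>2 / 2 \<le> cosh y"
proof -
  have "cosh 0 - 1 - 0\<^sup>2 / 2 \<le> cosh \<bar>y\<bar> - 1 - \<bar>y\<bar>\<^sup>2 / 2"
    by (rule DERIV_nonneg_imp_increasing_open[where f = "\<lambda>x. cosh x - 1 - x\<^sup>2 / 2"])
       (auto intro!: exI derivative_eq_intros continuous_intros sinh_real_ge_self)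
  then show ?thesis
    by simp
qed

lemma finite_sign_vectors [simp]: "finite (sign_vectors n)"
  unfolding sign_vectors_def by (intro finite_PiE) auto

lemma sign_vectors_nonempty [simp]: "sign_vectors n \<noteq> {}"
  unfolding sign_vectors_def by (simp add: PiE_eq_empty_iff)

lemma card_sign_vectors [simp]: "card (sign_vectors n) = 2 ^ n"
  unfolding sign_vectors_def by (simp add: card_PiE numeral_2_eq_2)

lemma sum_sign_vectors_exp:
  "(\<Sum>x\<in>sign_vectors n. exp (\<Sum>i<n. w i * x i)) = 2 ^ n * (\<Prod>i<n. cosh (w i))"
proof -
  have "(\<Sum>x\<in>sign_vectors n. exp (\<Sum>i<n. w i * x i)) = (\<Sum>x\<in>sign_vectors n. \<Prod>i<n. exp (w i * x i))"
    by (simp add: exp_sum)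
  also have "\<dots> = (\<Prod>i<n. \<Sum>s\<in>{-1, 1}. exp (w i * s))"
    unfolding sign_vectors_def by (subst prod_sum_PiE) auto
  also have "\<dots> = (\<Prod>i<n. 2 * cosh (w i))"
    by (intro prod.cong) (auto simp: cosh_def exp_minus)
  finally show ?thesis
    by (simp add: prod.distrib)
qed

definition exp_sq_moment :: "nat \<Rightarrow> (nat \<Rightarrow> real) \<Rightarrow> real \<Rightarrow> real" where
  "exp_sq_moment n u s =
     measure_pmf.expectation (rademacher n) (\<lambda>x. exp (s * (\<Sum>i<n. u i * x i)\<^sup>2 / 2))"

lemma exp_sq_moment_eq_sum:
  "exp_sq_moment n u s = (\<Sum>x\<in>sign_vectors n. exp (s * (\<Sum>i<n. u i * x i)\<^sup>2 / 2)) / 2 ^ n"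
  unfolding exp_sq_moment_def rademacher_def by (simp add: integral_pmf_of_set)

lemma exp_sq_moment_gaussian_cosh:
  "has_bochner_integral lborel (\<lambda>z. std_normal_density z * (\<Prod>i<n. cosh (\<sigma> * u i * z)))
     (exp_sq_moment n u (\<sigma>\<^sup>2))"
proof -
  let ?X = "\<lambda>x. \<Sum>i<n. u i * x i"
  have "has_bochner_integral lborel
      (\<lambda>z. (\<Sum>x\<in>sign_vectors n. std_normal_density z * exp (\<sigma> * ?X x * z)) / 2 ^ n)
      ((\<Sum>x\<in>sign_vectors n. exp ((\<sigma> * ?X x)\<^sup>2 / 2)) / 2 ^ n)"
    by (intro has_bochner_integral_divide_zero has_bochner_integral_sum std_normal_mgf)
  moreover have "(\<Sum>x\<in>sign_vectors n. std_normal_density z * exp (\<sigma> * ?X x * z)) / 2 ^ n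
      = std_normal_density z * (\<Prod>i<n. cosh (\<sigma> * u i * z))" for z
  proof -
    have "(\<Sum>x\<in>sign_vectors n. exp (\<sigma> * ?X x * z))
        = (\<Sum>x\<in>sign_vectors n. exp (\<Sum>i<n. (\<sigma> * u i * z) * x i))"
      by (simp add: sum_distrib_left sum_distrib_right mult_ac)
    then show ?thesis
      by (simp add: sum_sign_vectors_exp flip: sum_distrib_left)
  qed
  ultimately show ?thesis
    by (simp add: exp_sq_moment_eq_sum power_mult_distrib)
qed

lemma exp_sq_moment_le:
  assumes u: "u \<in> unit_sphere n" and s: "0 \<le> s" "s < 1"
  shows "exp_sq_moment n u s \<le> 1 / sqrt (1 - s)"
proof -
  have hs: "has_bochner_integral lborel
      (\<lambda>z. std_normal_density z * (\<Prod>i<n. cosh (sqrt s * u i * z))) (exp_sq_moment n u s)"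
    using exp_sq_moment_gaussian_cosh[where \<sigma> = "sqrt s"] s by simp
  have "(\<Prod>i<n. cosh (sqrt s * u i * z)) \<le> exp (s * z\<^sup>2 / 2)" for z
  proof -
    have "(\<Prod>i<n. cosh (sqrt s * u i * z)) \<le> (\<Prod>i<n. exp ((sqrt s * u i * z)\<^sup>2 / 2))"
      by (intro prod_mono conjI cosh_real_nonneg cosh_le_exp_square_half)
    also have "\<dots> = exp (\<Sum>i<n. (sqrt s * u i * z)\<^sup>2 / 2)"
      by (simp add: exp_sum)
    also have "(\<Sum>i<n. (sqrt s * u i * z)\<^sup>2 / 2) = s * z\<^sup>2 / 2 * (\<Sum>i<n. (u i)\<^sup>2)"
      using s by (simp add: sum_distrib_left power_mult_distrib mult_ac)
    finally show ?thesis
      using u by (simp add: unit_sphere_def)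
  qed
  then show ?thesis
    by (intro has_bochner_integral_mono[OF hs std_normal_exp_square[OF s(2)]] mult_left_mono) auto
qed

lemma psi2_norm_le:
  assumes "0 < t" "(\<integral>\<^sup>+\<omega>. ennreal (exp ((Y \<omega>)\<^sup>2 / t\<^sup>2)) \<partial>M) \<le> 2"
  shows "psi2_norm M Y \<le> t"
  unfolding psi2_norm_def using assms by (intro cInf_lower bdd_belowI[of _ 0]) auto

lemma psi2_norm_ge:
  assumes t0: "0 < t0" "(\<integral>\<^sup>+\<omega>. ennreal (exp ((Y \<omega>)\<^sup>2 / t0\<^sup>2)) \<partial>M) \<le> 2"
    and t: "0 < t" "2 < (\<integral>\<^sup>+\<omega>. ennreal (exp ((Y \<omega>)\<^sup>2 / t\<^sup>2)) \<partial>M)"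
  shows "t \<le> psi2_norm M Y"
  unfolding psi2_norm_def
proof (rule cInf_greatest)
  show "{t. 0 < t \<and> (\<integral>\<^sup>+\<omega>. ennreal (exp ((Y \<omega>)\<^sup>2 / t\<^sup>2)) \<partial>M) \<le> 2} \<noteq> {}"
    using t0 by blast
next
  fix r assume "r \<in> {t. 0 < t \<and> (\<integral>\<^sup>+\<omega>. ennreal (exp ((Y \<omega>)\<^sup>2 / t\<^sup>2)) \<partial>M) \<le> 2}"
  then have r: "0 < r" "(\<integral>\<^sup>+\<omega>. ennreal (exp ((Y \<omega>)\<^sup>2 / r\<^sup>2)) \<partial>M) \<le> 2"
    by auto
  show "t \<le> r"
  proof (rule ccontr)
    assume "\<not> t \<le> r"
    then have "r\<^sup>2 \<le> t\<^sup>2"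
      using r by (intro power_mono) auto
    then have "(Y \<omega>)\<^sup>2 / t\<^sup>2 \<le> (Y \<omega>)\<^sup>2 / r\<^sup>2" for \<omega>
      using r t by (intro divide_left_mono) auto
    then have "(\<integral>\<^sup>+\<omega>. ennreal (exp ((Y \<omega>)\<^sup>2 / t\<^sup>2)) \<partial>M) \<le> (\<integral>\<^sup>+\<omega>. ennreal (exp ((Y \<omega>)\<^sup>2 / r\<^sup>2)) \<partial>M)"
      by (intro nn_integral_mono ennreal_leI) simp
    then show False
      using t r by simp
  qed
qed

definition rademacher_psi2 :: "nat \<Rightarrow> (nat \<Rightarrow> real) \<Rightarrow> real" where
  "rademacher_psi2 n u = psi2_norm (measure_pmf (rademacher n)) (\<lambda>\<omega>. \<Sum>i<n. \<omega> i * u i)"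

lemma alpha_eq_Sup: "alpha n = Sup (rademacher_psi2 n ` unit_sphere n)"
  unfolding alpha_def psi2_vec_norm_def rademacher_psi2_def ..

lemma nn_integral_rademacher_exp_sq:
  assumes "t \<noteq> 0"
  shows "(\<integral>\<^sup>+\<omega>. ennreal (exp ((\<Sum>i<n. \<omega> i * u i)\<^sup>2 / t\<^sup>2)) \<partial>measure_pmf (rademacher n))
       = ennreal (exp_sq_moment n u (2 / t\<^sup>2))"
proof -
  have "finite (set_pmf (rademacher n))"
    by (simp add: rademacher_def)
  then show ?thesis
    unfolding exp_sq_moment_def
    by (subst nn_integral_eq_integral) (auto intro: integrable_measure_pmf_finite simp: mult_ac)
qed

lemma nn_integral_rademacher_exp_sq_le_2:
  assumes "u \<in> unit_sphere n"
  shows "(\<integral>\<^sup>+\<omega>. ennreal (exp ((\<Sum>i<n. \<omega> i * u i)\<^sup>2 / (sqrt 8 / sqrt 3)\<^sup>2)) \<partial>measure_pmf (rademacher n)) \<le> 2"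
proof -
  have "exp_sq_moment n u (3 / 4) \<le> 1 / sqrt (1 - 3 / 4)"
    using exp_sq_moment_le[OF assms, of "3 / 4"] by simp
  also have "\<dots> = 2"
    by (simp add: real_sqrt_divide)
  finally have "exp_sq_moment n u (2 / (sqrt 8 / sqrt 3)\<^sup>2) \<le> 2"
    by (simp add: power_divide)
  from ennreal_leI[OF this] show ?thesis
    by (subst nn_integral_rademacher_exp_sq) simp_all
qed

lemma rademacher_psi2_le:
  assumes "u \<in> unit_sphere n"
  shows "rademacher_psi2 n u \<le> sqrt 8 / sqrt 3"
  unfolding rademacher_psi2_def
  using nn_integral_rademacher_exp_sq_le_2[OF assms] by (intro psi2_norm_le) auto

lemma rademacher_psi2_ge:
  assumes "u \<in> unit_sphere n" "0 < t" "2 < exp_sq_moment n u (2 / t\<^sup>2)"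
  shows "t \<le> rademacher_psi2 n u"
  unfolding rademacher_psi2_def
proof (rule psi2_norm_ge)
  show "(\<integral>\<^sup>+\<omega>. ennreal (exp ((\<Sum>i<n. \<omega> i * u i)\<^sup>2 / (sqrt 8 / sqrt 3)\<^sup>2)) \<partial>measure_pmf (rademacher n)) \<le> 2"
    using nn_integral_rademacher_exp_sq_le_2[OF assms(1)] .
  show "2 < (\<integral>\<^sup>+\<omega>. ennreal (exp ((\<Sum>i<n. \<omega> i * u i)\<^sup>2 / t\<^sup>2)) \<partial>measure_pmf (rademacher n))"
    using assms by (simp add: nn_integral_rademacher_exp_sq)
qed (use assms in auto)

text \<open>The value \<open>undefined\<close> off \<open>{..<m}\<close> makes the vector extensional, as \<^const>\<open>unit_sphere\<close> requires.\<close>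
definition flat_unit_vector :: "nat \<Rightarrow> nat \<Rightarrow> real" where
  "flat_unit_vector m i = (if i < m then 1 / sqrt (real m) else undefined)"

lemma flat_unit_vector_in_unit_sphere:
  assumes "1 \<le> m"
  shows "flat_unit_vector m \<in> unit_sphere m"
  using assms by (auto simp: unit_sphere_def flat_unit_vector_def PiE_iff extensional_def power_divide)

lemma alpha_le:
  assumes "1 \<le> m"
  shows "alpha m \<le> sqrt 8 / sqrt 3"
  unfolding alpha_eq_Sup using flat_unit_vector_in_unit_sphere[OF assms]
  by (intro cSup_least) (auto intro: rademacher_psi2_le)

lemma rademacher_psi2_le_alpha:
  assumes "u \<in> unit_sphere m"
  shows "rademacher_psi2 m u \<le> alpha m"
  unfolding alpha_eq_Sup using assms rademacher_psi2_le
  by (intro cSup_upper bdd_aboveI[of _ "sqrt 8 / sqrt 3"]) auto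

lemma one_plus_div_power_le_exp:
  assumes "0 \<le> x"
  shows "(1 + x / real m) ^ m \<le> exp x"
  using assms exp_ge_one_plus_x_over_n_power_n[of m x] by (cases "m = 0") auto

lemma std_normal_exp_square_approx:
  fixes s :: real
  assumes "0 \<le> s" "s < 1"
  shows integrable_std_normal_exp_square_approx:
      "integrable lborel (\<lambda>z. std_normal_density z * (1 + s * z\<^sup>2 / 2 / real m) ^ m)"
    and tendsto_integral_std_normal_exp_square_approx:
      "(\<lambda>m. \<integral>z. std_normal_density z * (1 + s * z\<^sup>2 / 2 / real m) ^ m \<partial>lborel)
         \<longlonglongrightarrow> 1 / sqrt (1 - s)"
proof -
  have dom: "integrable lborel (\<lambda>z. std_normal_density z * exp (s * z\<^sup>2 / 2))"
    using std_normal_exp_square[OF assms(2)] by (simp add: has_bochner_integral_iff)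
  have lim: "AE z in lborel. (\<lambda>m. std_normal_density z * (1 + s * z\<^sup>2 / 2 / real m) ^ m)
      \<longlonglongrightarrow> std_normal_density z * exp (s * z\<^sup>2 / 2)"
    by (intro AE_I2 tendsto_mult_left tendsto_exp_limit_sequentially)
  have bound: "AE z in lborel. norm (std_normal_density z * (1 + s * z\<^sup>2 / 2 / real m) ^ m)
      \<le> std_normal_density z * exp (s * z\<^sup>2 / 2)" for m
  proof (intro AE_I2)
    fix z
    have "(1 + s * z\<^sup>2 / 2 / real m) ^ m \<le> exp (s * z\<^sup>2 / 2)"
      using assms by (intro one_plus_div_power_le_exp) simp
    then show "norm (std_normal_density z * (1 + s * z\<^sup>2 / 2 / real m) ^ m)
        \<le> std_normal_density z * exp (s * z\<^sup>2 / 2)"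
      using assms by (simp add: abs_mult mult_left_mono)
  qed
  show "integrable lborel (\<lambda>z. std_normal_density z * (1 + s * z\<^sup>2 / 2 / real m) ^ m)"
    by (rule integrable_dominated_convergence2[OF _ _ dom lim bound]) auto
  have "(\<lambda>m. \<integral>z. std_normal_density z * (1 + s * z\<^sup>2 / 2 / real m) ^ m \<partial>lborel)
      \<longlonglongrightarrow> (\<integral>z. std_normal_density z * exp (s * z\<^sup>2 / 2) \<partial>lborel)"
    by (rule integral_dominated_convergence[OF _ _ dom lim bound]) auto
  then show "(\<lambda>m. \<integral>z. std_normal_density z * (1 + s * z\<^sup>2 / 2 / real m) ^ m \<partial>lborel)
      \<longlonglongrightarrow> 1 / sqrt (1 - s)"
    using std_normal_exp_square[OF assms(2)] by (simp add: has_bochner_integral_iff)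
qed

lemma exp_sq_moment_flat_ge:
  assumes s: "0 \<le> s" "s < 1" and m: "1 \<le> m"
  shows "(\<integral>z. std_normal_density z * (1 + s * z\<^sup>2 / 2 / real m) ^ m \<partial>lborel)
    \<le> exp_sq_moment m (flat_unit_vector m) s"
proof (rule has_bochner_integral_mono)
  show "has_bochner_integral lborel (\<lambda>z. std_normal_density z * (1 + s * z\<^sup>2 / 2 / real m) ^ m)
      (\<integral>z. std_normal_density z * (1 + s * z\<^sup>2 / 2 / real m) ^ m \<partial>lborel)"
    using integrable_std_normal_exp_square_approx[OF s] by (simp add: has_bochner_integral_iff)
  show "has_bochner_integral lborel
      (\<lambda>z. std_normal_density z * (\<Prod>i<m. cosh (sqrt s * flat_unit_vector m i * z)))
      (exp_sq_moment m (flat_unit_vector m) s)"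
    using exp_sq_moment_gaussian_cosh[where \<sigma> = "sqrt s"] s by simp
  fix z
  have "1 + s * z\<^sup>2 / 2 / real m = 1 + (sqrt s / sqrt (real m) * z)\<^sup>2 / 2"
    using s m by (simp add: power_mult_distrib power_divide)
  also have "\<dots> \<le> cosh (sqrt s / sqrt (real m) * z)"
    by (rule one_plus_square_half_le_cosh)
  finally have "(1 + s * z\<^sup>2 / 2 / real m) ^ m \<le> (\<Prod>i<m. cosh (sqrt s * flat_unit_vector m i * z))"
    using s by (simp add: flat_unit_vector_def power_mono)
  then show "std_normal_density z * (1 + s * z\<^sup>2 / 2 / real m) ^ m
      \<le> std_normal_density z * (\<Prod>i<m. cosh (sqrt s * flat_unit_vector m i * z))"
    by (simp add: mult_left_mono)
qed

lemma eventually_rademacher_psi2_flat_ge: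
  assumes t: "sqrt 2 < t" "t < sqrt 8 / sqrt 3"
  shows "eventually (\<lambda>m. t \<le> rademacher_psi2 m (flat_unit_vector m)) sequentially"
proof -
  define s where "s = 2 / t\<^sup>2"
  have "0 < t"
    using t(1) by (smt (verit) real_sqrt_ge_zero)
  have "2 < t\<^sup>2" "t\<^sup>2 < 8 / 3"
    using t power_strict_mono[OF t(1), of 2] power_strict_mono[OF t(2), of 2] \<open>0 < t\<close>
    by (simp_all add: power_divide)
  then have s: "0 \<le> s" "s < 1" "3 / 4 < s"
    using \<open>0 < t\<close> by (simp_all add: s_def divide_less_eq less_divide_eq)
  then have "sqrt (1 - s) < sqrt (1 / 4)"
    by simp
  then have "sqrt (1 - s) < 1 / 2"
    by (simp add: real_sqrt_divide)
  with s have "2 < 1 / sqrt (1 - s)"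
    by (simp add: field_simps)
  then have "eventually (\<lambda>m. 2 < \<integral>z. std_normal_density z * (1 + s * z\<^sup>2 / 2 / real m) ^ m \<partial>lborel)
      sequentially"
    by (rule order_tendstoD(1)[OF tendsto_integral_std_normal_exp_square_approx[OF s(1,2)]])
  then show ?thesis
    using eventually_ge_at_top[of 1]
  proof eventually_elim
    case (elim m)
    with exp_sq_moment_flat_ge[OF s(1,2) elim(2)] show ?case
      by (intro rademacher_psi2_ge flat_unit_vector_in_unit_sphere \<open>0 < t\<close>) (auto simp: s_def)
  qed
qed

lemma tendsto_rademacher_psi2_flat:
  "(\<lambda>m. rademacher_psi2 m (flat_unit_vector m)) \<longlonglongrightarrow> sqrt 8 / sqrt 3"
proof (rule order_tendstoI)
  fix b assume b: "sqrt 8 / sqrt 3 < b"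
  show "eventually (\<lambda>m. rademacher_psi2 m (flat_unit_vector m) < b) sequentially"
    using eventually_ge_at_top[of 1]
    by eventually_elim (use b flat_unit_vector_in_unit_sphere rademacher_psi2_le in fastforce)
next
  fix a assume a: "a < sqrt 8 / sqrt 3"
  have "sqrt 2 < sqrt 8 / sqrt 3"
    by (simp add: real_sqrt_divide[symmetric])
  with a obtain t where t: "max a (sqrt 2) < t" "t < sqrt 8 / sqrt 3"
    using dense by (metis max_less_iff_conj)
  then have "eventually (\<lambda>m. t \<le> rademacher_psi2 m (flat_unit_vector m)) sequentially"
    by (intro eventually_rademacher_psi2_flat_ge) auto
  then show "eventually (\<lambda>m. a < rademacher_psi2 m (flat_unit_vector m)) sequentially"
    by eventually_elim (use t in auto)
qed

lemma tendsto_alpha: "alpha \<longlonglongrightarrow> sqrt 8 / sqrt 3"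
proof (rule tendsto_sandwich[OF _ _ tendsto_rademacher_psi2_flat tendsto_const])
  show "eventually (\<lambda>m. rademacher_psi2 m (flat_unit_vector m) \<le> alpha m) sequentially"
    using eventually_ge_at_top[of 1]
    by eventually_elim (intro rademacher_psi2_le_alpha flat_unit_vector_in_unit_sphere)
  show "eventually (\<lambda>m. alpha m \<le> sqrt 8 / sqrt 3) sequentially"
    using eventually_ge_at_top[of 1] by eventually_elim (rule alpha_le)
qed

theorem theoremB1:
  fixes n :: nat and u :: "nat \<Rightarrow> real" and \<sigma> :: real
  assumes u: "u \<in> unit_sphere n"
    and \<sigma>: "0 < \<sigma>" "\<sigma> < 1"
  shows "measure_pmf.expectation (rademacher n)
            (\<lambda>x. exp (\<sigma>\<^sup>2 * (\<Sum>i<n. u i * x i)\<^sup>2 / 2))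
          \<le> (\<integral>z. exp (\<sigma>\<^sup>2 * z\<^sup>2 / 2) \<partial>std_gaussian)
       \<and> (\<integral>z. exp (\<sigma>\<^sup>2 * z\<^sup>2 / 2) \<partial>std_gaussian) = 1 / sqrt (1 - \<sigma>\<^sup>2)
       \<and> (\<forall>m\<ge>1. alpha m \<le> sqrt 8 / sqrt 3)
       \<and> alpha \<longlonglongrightarrow> sqrt 8 / sqrt 3"
proof -
  have s: "0 \<le> \<sigma>\<^sup>2" "\<sigma>\<^sup>2 < 1"
    using \<sigma> by (simp_all add: power_less_one_iff)
  have gaussian: "(\<integral>z. exp (\<sigma>\<^sup>2 * z\<^sup>2 / 2) \<partial>std_gaussian) = 1 / sqrt (1 - \<sigma>\<^sup>2)"
    using std_normal_exp_square[OF s(2)] by (simp add: integral_std_gaussian has_bochner_integral_iff)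
  have "exp_sq_moment n u (\<sigma>\<^sup>2) \<le> 1 / sqrt (1 - \<sigma>\<^sup>2)"
    by (rule exp_sq_moment_le[OF u s])
  then show ?thesis
    using gaussian alpha_le tendsto_alpha by (simp add: exp_sq_moment_def)
qed

end
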